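(* Let $N\ge 1$ and let the data consist of $(Y_i,D_i,Z_i,X_i)$, $i=1,\dots,N$, with $Y_i\in\mathbb{R}$, $D_i,Z_i\in\{0,1\}$, and let $p$ be a fixed (known) function with values in $(0,1)$; write $p_i=p(X_i)$. Define $\kappa_{i1}=D_i\frac{Z_i-p_i}{p_i(1-p_i)}$, $\kappa_{i0}=(1-D_i)\frac{(1-Z_i)-(1-p_i)}{p_i(1-p_i)}$, $\kappa_i=1-\frac{D_i(1-Z_i)}{1-p_i}-\frac{(1-D_i)Z_i}{p_i}$, and the estimators $$\hat\tau_a=\Big[\sum_i\kappa_i\Big]^{-1}\sum_i Y_i\frac{Z_i-p_i}{p_i(1-p_i)},\quad \hat\tau_{a,1}=\Big[\sum_i\kappa_{i1}\Big]^{-1}\sum_i Y_i\frac{Z_i-p_i}{p_i(1-p_i)},\quad \hat\tau_{a,0}=\Big[\sum_i\kappa_{i0}\Big]^{-1}\sum_i Y_i\frac{Z_i-p_i}{p_i(1-p_i)},$$ $$\hat\tau_t=\Big[\sum_i\frac{D_iZ_i}{p_i}-\sum_i\frac{D_i(1-Z_i)}{1-p_i}\Big]^{-1}\Big[\sum_i\frac{Y_iZ_i}{p_i}-\sum_i\frac{Y_i(1-Z_i)}{1-p_i}\Big],$$ $$\hat\tau_{a,10}=\Big[\sum_i\kappa_{i1}\Big]^{-1}\sum_i\kappa_{i1}Y_i-\Big[\sum_i\kappa_{i0}\Big]^{-1}\sum_i\kappa_{i0}Y_i,$$ $$\hat\tau_{t,norm}=\frac{\big[\sum_i\frac{Z_i}{p_i}\big]^{-1}\sum_i\frac{Y_iZ_i}{p_i}-\big[\sum_i\frac{1-Z_i}{1-p_i}\big]^{-1}\sum_i\frac{Y_i(1-Z_i)}{1-p_i}}{\big[\sum_i\frac{Z_i}{p_i}\big]^{-1}\sum_i\frac{D_iZ_i}{p_i}-\big[\sum_i\frac{1-Z_i}{1-p_i}\big]^{-1}\sum_i\frac{D_i(1-Z_i)}{1-p_i}}$$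 (each considered where its denominators are nonzero). Then $\hat\tau_{t,norm}$ and $\hat\tau_{a,10}$ are translation invariant and scale invariant with respect to the natural logarithm, whereas $\hat\tau_a$, $\hat\tau_t$ ($=\hat\tau_{a,1}$) and $\hat\tau_{a,0}$ are not translation invariant and not scale invariant with respect to the natural logarithm.
   Context: Write $\mathbf{Y}=(Y_1,\dots,Y_N)$ and $\mathbf{W}$ for the remaining data $(D_i,Z_i,X_i)_{i=1}^N$, and view an estimator as a function $\hat\tau(\mathbf{Y},\mathbf{W})$. An estimator is translation invariant if $\hat\tau(\mathbf{Y},\mathbf{W})=\hat\tau(\mathbf{Y}+k,\mathbf{W})$ for all $\mathbf{Y}$, $\mathbf{W}$ and real $k$ (where $\mathbf{Y}+k$ adds $k$ to every coordinate). An estimator is scale invariant with respect to the natural logarithm if $\hat\tau(\log\mathbf{Y},\mathbf{W})=\hat\tau(\log(a\mathbf{Y}),\mathbf{W})$ for all $\mathbf{Y}>0$ (coordinatewise), all $\mathbf{W}$ and all $a>0$, where $\log$ is applied coordinatewise. "Not translation invariant / not scale invariant" means these identities fail for some admissible data and some $k$ (resp. $a$). *)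

theory Defs
  imports Complex_Main
begin

text \<open>Observations are indexed by i in {..<N} (i.e. 0..N-1 standing for 1..N).
  The remaining data W = (D, Z, X); D i, Z i are real numbers required to lie in {0,1};
  p is the fixed known propensity function, p_i = p (X i).\<close>

type_synonym 'x data = "(nat \<Rightarrow> real) \<times> (nat \<Rightarrow> real) \<times> (nat \<Rightarrow> 'x)"

definition kappa1 :: "('x \<Rightarrow> real) \<Rightarrow> 'x data \<Rightarrow> nat \<Rightarrow> real" where
  "kappa1 p W i = (case W of (D, Z, X) \<Rightarrow>
     D i * (Z i - p (X i)) / (p (X i) * (1 - p (X i))))"

definition kappa0 :: "('x \<Rightarrow> real) \<Rightarrow> 'x data \<Rightarrow> nat \<Rightarrow> real" where
  "kappa0 p W i = (case W of (D, Z, X) \<Rightarrow>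
     (1 - D i) * ((1 - Z i) - (1 - p (X i))) / (p (X i) * (1 - p (X i))))"

definition kappa :: "('x \<Rightarrow> real) \<Rightarrow> 'x data \<Rightarrow> nat \<Rightarrow> real" where
  "kappa p W i = (case W of (D, Z, X) \<Rightarrow>
     1 - D i * (1 - Z i) / (1 - p (X i)) - (1 - D i) * Z i / p (X i))"

definition ipw_num :: "nat \<Rightarrow> ('x \<Rightarrow> real) \<Rightarrow> (nat \<Rightarrow> real) \<Rightarrow> 'x data \<Rightarrow> real" where
  "ipw_num N p Y W = (case W of (D, Z, X) \<Rightarrow>
     (\<Sum>i<N. Y i * (Z i - p (X i)) / (p (X i) * (1 - p (X i)))))"

definition tau_a :: "nat \<Rightarrow> ('x \<Rightarrow> real) \<Rightarrow> (nat \<Rightarrow> real) \<Rightarrow> 'x data \<Rightarrow> real" where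
  "tau_a N p Y W = ipw_num N p Y W / (\<Sum>i<N. kappa p W i)"

definition tau_a1 :: "nat \<Rightarrow> ('x \<Rightarrow> real) \<Rightarrow> (nat \<Rightarrow> real) \<Rightarrow> 'x data \<Rightarrow> real" where
  "tau_a1 N p Y W = ipw_num N p Y W / (\<Sum>i<N. kappa1 p W i)"

definition tau_a0 :: "nat \<Rightarrow> ('x \<Rightarrow> real) \<Rightarrow> (nat \<Rightarrow> real) \<Rightarrow> 'x data \<Rightarrow> real" where
  "tau_a0 N p Y W = ipw_num N p Y W / (\<Sum>i<N. kappa0 p W i)"

definition tau_t_den :: "nat \<Rightarrow> ('x \<Rightarrow> real) \<Rightarrow> 'x data \<Rightarrow> real" where
  "tau_t_den N p W = (case W of (D, Z, X) \<Rightarrow>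
     (\<Sum>i<N. D i * Z i / p (X i)) - (\<Sum>i<N. D i * (1 - Z i) / (1 - p (X i))))"

definition tau_t :: "nat \<Rightarrow> ('x \<Rightarrow> real) \<Rightarrow> (nat \<Rightarrow> real) \<Rightarrow> 'x data \<Rightarrow> real" where
  "tau_t N p Y W = (case W of (D, Z, X) \<Rightarrow>
     ((\<Sum>i<N. Y i * Z i / p (X i)) - (\<Sum>i<N. Y i * (1 - Z i) / (1 - p (X i))))
     / tau_t_den N p W)"

definition tau_a10 :: "nat \<Rightarrow> ('x \<Rightarrow> real) \<Rightarrow> (nat \<Rightarrow> real) \<Rightarrow> 'x data \<Rightarrow> real" where
  "tau_a10 N p Y W =
     (\<Sum>i<N. kappa1 p W i * Y i) / (\<Sum>i<N. kappa1 p W i)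
   - (\<Sum>i<N. kappa0 p W i * Y i) / (\<Sum>i<N. kappa0 p W i)"

definition sZ :: "nat \<Rightarrow> ('x \<Rightarrow> real) \<Rightarrow> 'x data \<Rightarrow> real" where
  "sZ N p W = (case W of (D, Z, X) \<Rightarrow> \<Sum>i<N. Z i / p (X i))"

definition s1Z :: "nat \<Rightarrow> ('x \<Rightarrow> real) \<Rightarrow> 'x data \<Rightarrow> real" where
  "s1Z N p W = (case W of (D, Z, X) \<Rightarrow> \<Sum>i<N. (1 - Z i) / (1 - p (X i)))"

definition tnorm_den :: "nat \<Rightarrow> ('x \<Rightarrow> real) \<Rightarrow> 'x data \<Rightarrow> real" where
  "tnorm_den N p W = (case W of (D, Z, X) \<Rightarrow>
     (\<Sum>i<N. D i * Z i / p (X i)) / sZ N p W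
   - (\<Sum>i<N. D i * (1 - Z i) / (1 - p (X i))) / s1Z N p W)"

definition tau_tnorm :: "nat \<Rightarrow> ('x \<Rightarrow> real) \<Rightarrow> (nat \<Rightarrow> real) \<Rightarrow> 'x data \<Rightarrow> real" where
  "tau_tnorm N p Y W = (case W of (D, Z, X) \<Rightarrow>
     ((\<Sum>i<N. Y i * Z i / p (X i)) / sZ N p W
      - (\<Sum>i<N. Y i * (1 - Z i) / (1 - p (X i))) / s1Z N p W)
     / tnorm_den N p W)"

definition binary_data :: "nat \<Rightarrow> 'x data \<Rightarrow> bool" where
  "binary_data N W = (case W of (D, Z, X) \<Rightarrow>
     (\<forall>i<N. D i \<in> {0, 1} \<and> Z i \<in> {0, 1}))"

definition adm_a :: "nat \<Rightarrow> ('x \<Rightarrow> real) \<Rightarrow> 'x data \<Rightarrow> bool" where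
  "adm_a N p W \<longleftrightarrow> binary_data N W \<and> (\<Sum>i<N. kappa p W i) \<noteq> 0"
definition adm_a1 :: "nat \<Rightarrow> ('x \<Rightarrow> real) \<Rightarrow> 'x data \<Rightarrow> bool" where
  "adm_a1 N p W \<longleftrightarrow> binary_data N W \<and> (\<Sum>i<N. kappa1 p W i) \<noteq> 0"
definition adm_a0 :: "nat \<Rightarrow> ('x \<Rightarrow> real) \<Rightarrow> 'x data \<Rightarrow> bool" where
  "adm_a0 N p W \<longleftrightarrow> binary_data N W \<and> (\<Sum>i<N. kappa0 p W i) \<noteq> 0"
definition adm_t :: "nat \<Rightarrow> ('x \<Rightarrow> real) \<Rightarrow> 'x data \<Rightarrow> bool" where
  "adm_t N p W \<longleftrightarrow> binary_data N W \<and> tau_t_den N p W \<noteq> 0"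
definition adm_a10 :: "nat \<Rightarrow> ('x \<Rightarrow> real) \<Rightarrow> 'x data \<Rightarrow> bool" where
  "adm_a10 N p W \<longleftrightarrow> binary_data N W \<and> (\<Sum>i<N. kappa1 p W i) \<noteq> 0
      \<and> (\<Sum>i<N. kappa0 p W i) \<noteq> 0"
definition adm_tnorm :: "nat \<Rightarrow> ('x \<Rightarrow> real) \<Rightarrow> 'x data \<Rightarrow> bool" where
  "adm_tnorm N p W \<longleftrightarrow> binary_data N W \<and> sZ N p W \<noteq> 0 \<and> s1Z N p W \<noteq> 0
      \<and> tnorm_den N p W \<noteq> 0"

definition translation_invariant ::
  "nat \<Rightarrow> ((nat \<Rightarrow> real) \<Rightarrow> 'w \<Rightarrow> real) \<Rightarrow> ('w \<Rightarrow> bool) \<Rightarrow> bool" where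
  "translation_invariant N est adm \<longleftrightarrow>
     (\<forall>Y W (k::real). adm W \<longrightarrow> est Y W = est (\<lambda>i. Y i + k) W)"

definition scale_invariant_ln ::
  "nat \<Rightarrow> ((nat \<Rightarrow> real) \<Rightarrow> 'w \<Rightarrow> real) \<Rightarrow> ('w \<Rightarrow> bool) \<Rightarrow> bool" where
  "scale_invariant_ln N est adm \<longleftrightarrow>
     (\<forall>Y W (a::real). adm W \<longrightarrow> (\<forall>i<N. Y i > 0) \<longrightarrow> a > 0 \<longrightarrow>
        est (\<lambda>i. ln (Y i)) W = est (\<lambda>i. ln (a * Y i)) W)"

end

theory Submission
  imports Defs
begin

text \<open>The two normalised estimators are differences of weighted means of Y (divided, for
  the Wald form, by a quantity not involving Y). Adding k to every outcome adds k to each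
  weighted mean, so the shift cancels; and since ln (a Y) = ln Y + ln a, scale invariance
  with respect to ln is translation invariance in disguise. The other three estimators are
  ratios whose numerator is linear in Y and whose denominator does not involve Y. With
  everybody assigned (Z = 1), the numerator of the constant outcome 1 is N / p, so moving
  from Y = 0 to Y = 1 (a shift by 1, or ln 1 to ln (e * 1)) changes the estimate.\<close>

lemma scale_invariant_ln_if_translation_invariant:
  fixes est :: "(nat \<Rightarrow> real) \<Rightarrow> 'w \<Rightarrow> real"
  assumes translation: "translation_invariant N est adm"
    and local: "\<And>Y Y' W. (\<forall>i<N. Y i = Y' i) \<Longrightarrow> est Y W = est Y' W"
  shows "scale_invariant_ln N est adm"
  unfolding scale_invariant_ln_def
proof (intro allI impI)
  fix Y :: "nat \<Rightarrow> real" and W and a :: real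
  assume "adm W" and Y_pos: "\<forall>i<N. 0 < Y i" and "0 < a"
  have "est (\<lambda>i. ln (Y i)) W = est (\<lambda>i. ln (Y i) + ln a) W"
    using translation \<open>adm W\<close> unfolding translation_invariant_def by blast
  also have "\<dots> = est (\<lambda>i. ln (a * Y i)) W"
    by (rule local) (use Y_pos \<open>0 < a\<close> in \<open>auto simp: ln_mult\<close>)
  finally show "est (\<lambda>i. ln (Y i)) W = est (\<lambda>i. ln (a * Y i)) W" .
qed

lemma not_invariant_if_constant_outcomes_differ:
  assumes "adm W" and "est (\<lambda>i. 0) W \<noteq> est (\<lambda>i. 1) W"
  shows "\<not> translation_invariant N est adm \<and> \<not> scale_invariant_ln N est adm"
proof
  show "\<not> translation_invariant N est adm"
  proof
    assume "translation_invariant N est adm"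
    then have "est (\<lambda>i. 0) W = est (\<lambda>i. 0 + 1) W"
      using \<open>adm W\<close> unfolding translation_invariant_def by blast
    with assms(2) show False by simp
  qed
  show "\<not> scale_invariant_ln N est adm"
  proof
    assume "scale_invariant_ln N est adm"
    then have "est (\<lambda>i. ln 1) W = est (\<lambda>i. ln (exp 1 * 1)) W"
      using \<open>adm W\<close> unfolding scale_invariant_ln_def
      by (simp only: exp_gt_zero zero_less_one simp_thms)
    with assms(2) show False by simp
  qed
qed

lemma weighted_mean_translate:
  fixes w Y :: "nat \<Rightarrow> real"
  assumes "(\<Sum>i<N. w i) \<noteq> 0"
  shows "(\<Sum>i<N. w i * (Y i + k)) / (\<Sum>i<N. w i)
    = (\<Sum>i<N. w i * Y i) / (\<Sum>i<N. w i) + k"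
proof -
  have "(\<Sum>i<N. w i * (Y i + k)) = (\<Sum>i<N. w i * Y i) + k * (\<Sum>i<N. w i)"
    by (simp add: distrib_left sum.distrib sum_distrib_left mult.commute)
  with assms show ?thesis by (simp add: add_divide_distrib)
qed

lemma tau_tnorm_translation_invariant:
  "translation_invariant N (tau_tnorm N p) (adm_tnorm N p)"
  unfolding translation_invariant_def
proof (intro allI impI)
  fix Y W and k :: real
  assume adm: "adm_tnorm N p W"
  obtain D Z X where W: "W = (D, Z, X)" by (cases W)
  have "sZ N p W \<noteq> 0" "s1Z N p W \<noteq> 0"
    using adm by (auto simp: adm_tnorm_def)
  then have
    "(\<Sum>i<N. (Y i + k) * Z i / p (X i)) / sZ N p W
       = (\<Sum>i<N. Y i * Z i / p (X i)) / sZ N p W + k"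
    "(\<Sum>i<N. (Y i + k) * (1 - Z i) / (1 - p (X i))) / s1Z N p W
       = (\<Sum>i<N. Y i * (1 - Z i) / (1 - p (X i))) / s1Z N p W + k"
    using weighted_mean_translate[where w = "\<lambda>i. Z i / p (X i)"]
      weighted_mean_translate[where w = "\<lambda>i. (1 - Z i) / (1 - p (X i))"]
    by (simp_all add: W sZ_def s1Z_def mult.commute)
  then show "tau_tnorm N p Y W = tau_tnorm N p (\<lambda>i. Y i + k) W"
    by (simp add: tau_tnorm_def W)
qed

lemma tau_a10_translation_invariant:
  "translation_invariant N (tau_a10 N p) (adm_a10 N p)"
  unfolding translation_invariant_def
proof (intro allI impI)
  fix Y W and k :: real
  assume "adm_a10 N p W"
  then have "(\<Sum>i<N. kappa1 p W i) \<noteq> 0" "(\<Sum>i<N. kappa0 p W i) \<noteq> 0"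
    by (auto simp: adm_a10_def)
  then show "tau_a10 N p Y W = tau_a10 N p (\<lambda>i. Y i + k) W"
    by (simp add: tau_a10_def weighted_mean_translate)
qed

lemma tau_tnorm_scale_invariant_ln:
  "scale_invariant_ln N (tau_tnorm N p) (adm_tnorm N p)"
  by (rule scale_invariant_ln_if_translation_invariant[OF tau_tnorm_translation_invariant])
    (simp add: tau_tnorm_def split: prod.split)

lemma tau_a10_scale_invariant_ln:
  "scale_invariant_ln N (tau_a10 N p) (adm_a10 N p)"
  by (rule scale_invariant_ln_if_translation_invariant[OF tau_a10_translation_invariant])
    (simp add: tau_a10_def)

lemma ipw_difference_eq:
  fixes a z q :: real
  assumes "q \<noteq> 0" "q \<noteq> 1"
  shows "a * z / q - a * (1 - z) / (1 - q) = a * (z - q) / (q * (1 - q))"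
  using assms by (simp add: field_simps)

lemma tau_t_den_eq_sum_kappa1:
  assumes "\<And>x. 0 < p x \<and> p x < 1"
  shows "tau_t_den N p W = (\<Sum>i<N. kappa1 p W i)"
proof (cases W)
  case (fields D Z X)
  have "p x \<noteq> 0" "p x \<noteq> 1" for x using assms[of x] by auto
  then show ?thesis
    unfolding fields tau_t_den_def kappa1_def prod.case sum_subtractf[symmetric]
    by (intro sum.cong refl ipw_difference_eq)
qed

lemma tau_t_eq_tau_a1:
  assumes "\<And>x. 0 < p x \<and> p x < 1"
  shows "tau_t N p Y W = tau_a1 N p Y W"
proof (cases W)
  case (fields D Z X)
  have "p x \<noteq> 0" "p x \<noteq> 1" for x using assms[of x] by auto
  then have "(\<Sum>i<N. Y i * Z i / p (X i)) - (\<Sum>i<N. Y i * (1 - Z i) / (1 - p (X i)))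
      = ipw_num N p Y W"
    unfolding fields ipw_num_def prod.case sum_subtractf[symmetric]
    by (intro sum.cong refl ipw_difference_eq)
  then show ?thesis
    by (simp add: tau_t_def tau_a1_def tau_t_den_eq_sum_kappa1[OF assms] fields)
qed

lemma ipw_num_zero: "ipw_num N p (\<lambda>i. 0) W = 0"
  by (cases W) (simp add: ipw_num_def)

lemma ipw_num_one_all_assigned:
  assumes "0 < p x" "p x < 1"
  shows "ipw_num N p (\<lambda>i. 1) (\<lambda>i. d, \<lambda>i. 1, \<lambda>i. x) = real N / p x"
  using assms by (simp add: ipw_num_def field_simps)

lemma not_invariant_if_ipw_ratio:
  assumes est: "\<And>Y. est Y W = ipw_num N p Y W / c"
    and "adm W" "c \<noteq> 0" "ipw_num N p (\<lambda>i. 1) W \<noteq> 0"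
  shows "\<not> translation_invariant N est adm \<and> \<not> scale_invariant_ln N est adm"
  by (rule not_invariant_if_constant_outcomes_differ[where W = W])
    (use assms in \<open>simp_all add: est ipw_num_zero\<close>)

context
  fixes N :: nat and p :: "'x \<Rightarrow> real" and x :: 'x
  assumes N: "N \<ge> 1" and p: "0 < p x" "p x < 1"
begin

lemma tau_a_not_invariant:
  "\<not> translation_invariant N (tau_a N p) (adm_a N p)
    \<and> \<not> scale_invariant_ln N (tau_a N p) (adm_a N p)"
proof -
  let ?W = "(\<lambda>i. 1, \<lambda>i. 1, \<lambda>i. x) :: 'x data"
  have "(\<Sum>i<N. kappa p ?W i) = real N"
    by (simp add: kappa_def)
  with N p show ?thesis
    by (intro not_invariant_if_ipw_ratio
        [where W = ?W and p = p and c = "\<Sum>i<N. kappa p ?W i"])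
      (auto simp: tau_a_def adm_a_def binary_data_def ipw_num_one_all_assigned)
qed

lemma tau_a1_not_invariant:
  "\<not> translation_invariant N (tau_a1 N p) (adm_a1 N p)
    \<and> \<not> scale_invariant_ln N (tau_a1 N p) (adm_a1 N p)"
proof -
  let ?W = "(\<lambda>i. 1, \<lambda>i. 1, \<lambda>i. x) :: 'x data"
  have "(\<Sum>i<N. kappa1 p ?W i) = real N / p x"
    using p by (simp add: kappa1_def field_simps)
  with N p show ?thesis
    by (intro not_invariant_if_ipw_ratio
        [where W = ?W and p = p and c = "\<Sum>i<N. kappa1 p ?W i"])
      (auto simp: tau_a1_def adm_a1_def binary_data_def ipw_num_one_all_assigned)
qed

lemma tau_a0_not_invariant:
  "\<not> translation_invariant N (tau_a0 N p) (adm_a0 N p)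
    \<and> \<not> scale_invariant_ln N (tau_a0 N p) (adm_a0 N p)"
proof -
  let ?W = "(\<lambda>i. 0, \<lambda>i. 1, \<lambda>i. x) :: 'x data"
  have "(\<Sum>i<N. kappa0 p ?W i) = - real N / p x"
    using p by (simp add: kappa0_def field_simps)
  with N p show ?thesis
    by (intro not_invariant_if_ipw_ratio
        [where W = ?W and p = p and c = "\<Sum>i<N. kappa0 p ?W i"])
      (auto simp: tau_a0_def adm_a0_def binary_data_def ipw_num_one_all_assigned)
qed

end

theorem proposition1:
  fixes N :: nat and p :: "'x \<Rightarrow> real"
  assumes "N \<ge> 1"
    and "\<And>x. 0 < p x \<and> p x < 1"
  shows "translation_invariant N (tau_tnorm N p) (adm_tnorm N p)
       \<and> scale_invariant_ln N (tau_tnorm N p) (adm_tnorm N p)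
       \<and> translation_invariant N (tau_a10 N p) (adm_a10 N p)
       \<and> scale_invariant_ln N (tau_a10 N p) (adm_a10 N p)
       \<and> \<not> translation_invariant N (tau_a N p) (adm_a N p)
       \<and> \<not> scale_invariant_ln N (tau_a N p) (adm_a N p)
       \<and> (\<forall>Y W. binary_data N W \<longrightarrow> tau_t N p Y W = tau_a1 N p Y W)
       \<and> \<not> translation_invariant N (tau_t N p) (adm_t N p)
       \<and> \<not> scale_invariant_ln N (tau_t N p) (adm_t N p)
       \<and> \<not> translation_invariant N (tau_a1 N p) (adm_a1 N p)
       \<and> \<not> scale_invariant_ln N (tau_a1 N p) (adm_a1 N p)
       \<and> \<not> translation_invariant N (tau_a0 N p) (adm_a0 N p)
       \<and> \<not> scale_invariant_ln N (tau_a0 N p) (adm_a0 N p)"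
proof -
  fix x :: 'x
  have px: "0 < p x" "p x < 1" using assms(2) by auto
  have "tau_t N p = tau_a1 N p" "adm_t N p = adm_a1 N p"
    using assms(2)
    by (auto intro!: ext simp: tau_t_eq_tau_a1 adm_t_def adm_a1_def tau_t_den_eq_sum_kappa1)
  then show ?thesis
    using tau_a_not_invariant[where p = p, OF assms(1) px]
      tau_a1_not_invariant[where p = p, OF assms(1) px]
      tau_a0_not_invariant[where p = p, OF assms(1) px]
    by (simp add: tau_tnorm_translation_invariant tau_tnorm_scale_invariant_ln
        tau_a10_translation_invariant tau_a10_scale_invariant_ln)
qed

end
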